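(* Let $(X,\widetilde{\tau},\mathfrak{a}_E,E)$ be a soft aura topological space. Then the soft aura-closure operator $\mathrm{cl}_{\mathfrak{a}}$ satisfies, for all $(G,E),(H,E)\in\mathrm{SS}(X,E)$: (i) (Grounding) $\mathrm{cl}_{\mathfrak{a}}(\widetilde{\Phi})=\widetilde{\Phi}$; (ii) (Enlargement) $(G,E)\sqsubseteq \mathrm{cl}_{\mathfrak{a}}(G,E)$; (iii) (Monotonicity) if $(G,E)\sqsubseteq(H,E)$ then $\mathrm{cl}_{\mathfrak{a}}(G,E)\sqsubseteq\mathrm{cl}_{\mathfrak{a}}(H,E)$; (iv) (Soft additivity) $\mathrm{cl}_{\mathfrak{a}}((G,E)\sqcup(H,E))=\mathrm{cl}_{\mathfrak{a}}(G,E)\sqcup\mathrm{cl}_{\mathfrak{a}}(H,E)$. Hence $\mathrm{cl}_{\mathfrak{a}}$ is a soft additive Čech closure operator (an operator on $\mathrm{SS}(X,E)$ satisfying (i)–(iv)).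
   Context: Let $X$ be a nonempty set and $E$ a nonempty parameter set. A soft set over $X$ is a map $F:E\to\mathcal{P}(X)$, written $(F,E)$; $\mathrm{SS}(X,E)$ denotes the family of all soft sets. Operations are parameterwise: $(F,E)\sqsubseteq(G,E)$ iff $F(e)\subseteq G(e)$ for all $e\in E$; soft union $\sqcup$ and soft intersection $\sqcap$ are pointwise union/intersection; the complement is $(F,E)^c(e)=X\setminus F(e)$. The null soft set $\widetilde{\Phi}$ has all values $\emptyset$; the absolute soft set $\widetilde{X}$ has all values $X$. A soft topology $\widetilde{\tau}$ is a subfamily of $\mathrm{SS}(X,E)$ containing $\widetilde{\Phi},\widetilde{X}$ and closed under arbitrary soft unions and finite soft intersections. A soft scope function is a map $\mathfrak{a}_E:X\to\widetilde{\tau}$ with $x\in\mathfrak{a}_E(x)(e)$ for every $x\in X$, $e\in E$; then $(X,\widetilde{\tau},\mathfrak{a}_E,E)$ is a soft aura topological space. The soft aura-closure is $\mathrm{cl}_{\mathfrak{a}}(G,E)=(H,E)$ with $H(e)=\{x\in X:\mathfrak{a}_E(x)(e)\cap G(e)\neq\emptyset\}$. *)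

theory Defs
  imports Main
begin

(* Soft sets over the universe X = UNIV :: 'x set with parameter set E = UNIV :: 'e set
   (both nonempty, as all HOL types are). A soft set (F,E) is a map F :: 'e => 'x set. *)
type_synonym ('e, 'x) soft_set = "'e \<Rightarrow> 'x set"

definition soft_subset :: "('e,'x) soft_set \<Rightarrow> ('e,'x) soft_set \<Rightarrow> bool" where
  "soft_subset F G \<longleftrightarrow> (\<forall>e. F e \<subseteq> G e)"

definition soft_union :: "('e,'x) soft_set \<Rightarrow> ('e,'x) soft_set \<Rightarrow> ('e,'x) soft_set" where
  "soft_union F G = (\<lambda>e. F e \<union> G e)"

definition soft_inter :: "('e,'x) soft_set \<Rightarrow> ('e,'x) soft_set \<Rightarrow> ('e,'x) soft_set" where
  "soft_inter F G = (\<lambda>e. F e \<inter> G e)"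

definition soft_Union :: "('e,'x) soft_set set \<Rightarrow> ('e,'x) soft_set" where
  "soft_Union S = (\<lambda>e. \<Union>F\<in>S. F e)"

definition null_soft :: "('e,'x) soft_set" where
  "null_soft = (\<lambda>e. {})"

definition absolute_soft :: "('e,'x) soft_set" where
  "absolute_soft = (\<lambda>e. UNIV)"

definition soft_topology :: "('e,'x) soft_set set \<Rightarrow> bool" where
  "soft_topology T \<longleftrightarrow> null_soft \<in> T \<and> absolute_soft \<in> T
     \<and> (\<forall>S. S \<subseteq> T \<longrightarrow> soft_Union S \<in> T)
     \<and> (\<forall>F G. F \<in> T \<longrightarrow> G \<in> T \<longrightarrow> soft_inter F G \<in> T)"

definition soft_scope_function :: "('e,'x) soft_set set \<Rightarrow> ('x \<Rightarrow> ('e,'x) soft_set) \<Rightarrow> bool" where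
  "soft_scope_function T a \<longleftrightarrow> (\<forall>x. a x \<in> T) \<and> (\<forall>x e. x \<in> a x e)"

definition soft_aura_space :: "('e,'x) soft_set set \<Rightarrow> ('x \<Rightarrow> ('e,'x) soft_set) \<Rightarrow> bool" where
  "soft_aura_space T a \<longleftrightarrow> soft_topology T \<and> soft_scope_function T a"

definition aura_closure :: "('x \<Rightarrow> ('e,'x) soft_set) \<Rightarrow> ('e,'x) soft_set \<Rightarrow> ('e,'x) soft_set" where
  "aura_closure a G = (\<lambda>e. {x. a x e \<inter> G e \<noteq> {}})"

end

theory Submission
  imports Defs
begin

lemma aura_closure_null: "aura_closure a null_soft = null_soft"
  by (simp add: aura_closure_def null_soft_def)

lemma soft_subset_aura_closure:
  assumes "\<And>x e. x \<in> a x e"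
  shows "soft_subset G (aura_closure a G)"
  using assms by (auto simp: soft_subset_def aura_closure_def)

lemma aura_closure_mono:
  assumes "soft_subset G H"
  shows "soft_subset (aura_closure a G) (aura_closure a H)"
  using assms by (fastforce simp: soft_subset_def aura_closure_def)

lemma aura_closure_soft_union:
  "aura_closure a (soft_union G H) = soft_union (aura_closure a G) (aura_closure a H)"
  by (auto simp: aura_closure_def soft_union_def Int_Un_distrib)

lemma soft_aura_space_mem_scope:
  assumes "soft_aura_space T a"
  shows "x \<in> a x e"
  using assms by (simp add: soft_aura_space_def soft_scope_function_def)

theorem theorem3p8:
  fixes T :: "('e,'x) soft_set set" and a :: "'x \<Rightarrow> ('e,'x) soft_set"
  assumes "soft_aura_space T a"
  shows "aura_closure a null_soft = null_soft
    \<and> (\<forall>G. soft_subset G (aura_closure a G))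
    \<and> (\<forall>G H. soft_subset G H \<longrightarrow> soft_subset (aura_closure a G) (aura_closure a H))
    \<and> (\<forall>G H. aura_closure a (soft_union G H) = soft_union (aura_closure a G) (aura_closure a H))"
proof -
  have "\<And>x e. x \<in> a x e"
    using assms by (rule soft_aura_space_mem_scope)
  then show ?thesis
    by (simp add: aura_closure_null soft_subset_aura_closure aura_closure_mono
        aura_closure_soft_union)
qed

end
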